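(* Let $n,p,d$ be positive integers with $n>p$, and let $$H=\frac{\det(P(t^{d-1}))}{t^{(d-1)\binom{p-1}{2}}}\frac{(1-t^d)^p(1-t^{d-1})^{n-p}}{(1-t)^n},$$ where $P(t)$ is the $(p-1)\times(p-1)$ matrix whose $(i,j)$ entry is $\sum_{k\ge0}\binom{p-i}{k}\binom{n-1-j}{k}t^k$. Then $H$ is a unimodal polynomial.
   Context: A polynomial $\sum_{k=0}^n a_kt^k$ with non-negative real coefficients is unimodal if there is an integer $N$ with $a_k\le a_{k+1}\le a_N$ for all $k<N$ and $a_N\ge a_k\ge a_{k+1}$ for all $k\ge N$. ($H$ is the Hilbert series of a generic determinantal ideal with parameters $(n,p,d)$.) *)

theory Defs
  imports "HOL-Computational_Algebra.Polynomial" "Jordan_Normal_Form.Determinant"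
begin

text \<open>The (p-1) x (p-1) matrix P(t) with 0-indexed rows/columns: the paper's entry (i,j),
  1-indexed, is sum over k of binom(p-i,k) binom(n-1-j,k) t^k.  All terms with k > p vanish.\<close>
definition Pmat :: "nat \<Rightarrow> nat \<Rightarrow> real poly mat" where
  "Pmat n p = mat (p - 1) (p - 1)
     (\<lambda>(i, j). \<Sum>k\<le>p. monom (of_nat ((p - (i+1)) choose k) * of_nat ((n - 1 - (j+1)) choose k)) k)"

definition unimodal_poly :: "real poly \<Rightarrow> bool" where
  "unimodal_poly q \<longleftrightarrow> (\<forall>k. coeff q k \<ge> 0) \<and>
     (\<exists>N. (\<forall>k<N. coeff q k \<le> coeff q (k+1) \<and> coeff q (k+1) \<le> coeff q N) \<and>
          (\<forall>k\<ge>N. coeff q N \<ge> coeff q k \<and> coeff q k \<ge> coeff q (k+1)))"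

end

theory Submission
  imports Defs "HOL-Computational_Algebra.Formal_Power_Series"
begin

text \<open>Write \<open>q = p - 1\<close>, \<open>c = n - p\<close> and \<open>e = d - 1\<close>. With the reversed Pascal matrix
  \<open>A(i,m) = C(q-1-i, q-1-m)\<close> and \<open>D = diag(t^(q-1), ..., t, 1)\<close>, Chu-Vandermonde and Pascal's
  rule give \<open>P = A D E A^T\<close> with the band matrix \<open>E(m,l) = C(c, l-m) + t C(c, l+1-m)\<close>.
  Multiplying \<open>E\<close> on the right by the inverse of the Toeplitz matrix of \<open>(1 + x)^c\<close> and by
  \<open>(I + t L)^-1\<close> clears all rows but the first, so \<open>det P = t^C(q,2) h(t)\<close> with
  \<open>h(t) = \<Sum>k\<le>q. C(c-1+k, k) t^k\<close>. As \<open>1 - t^l = (1 - t) [l]\<close> with \<open>[l] = 1 + t + ... + t^(l-1)\<close>,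
  this gives \<open>H = h(t^e) [e]^c [d]^p\<close>. The coefficients of \<open>h(t^e) [e]\<close> are those of \<open>h\<close>, each
  repeated \<open>e\<close> times, so they increase and then vanish; and multiplying a non-negative unimodal
  sequence by \<open>[l]\<close> takes moving window sums, whose differences \<open>a(k+1) - a(k+1-l)\<close> change sign
  only once.\<close>

section \<open>Unimodality\<close>

definition unimodal_seq :: "(nat \<Rightarrow> real) \<Rightarrow> bool" where
  "unimodal_seq f \<longleftrightarrow> (\<exists>N. (\<forall>k<N. f k \<le> f (Suc k)) \<and> (\<forall>k\<ge>N. f (Suc k) \<le> f k))"

lemma lift_Suc_mono_le_upto:
  fixes f :: "nat \<Rightarrow> real"
  assumes "\<forall>k<N. f k \<le> f (Suc k)" "i \<le> j" "j \<le> N"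
  shows "f i \<le> f j"
  using assms(2,3)
proof (induction j rule: dec_induct)
  case (step n)
  then have "f i \<le> f n" by simp
  also have "f n \<le> f (Suc n)" using assms(1) step by simp
  finally show ?case .
qed simp

lemma lift_Suc_antimono_le_from:
  fixes f :: "nat \<Rightarrow> real"
  assumes "\<forall>k\<ge>N. f (Suc k) \<le> f k" "N \<le> i" "i \<le> j"
  shows "f j \<le> f i"
  using assms(3)
proof (induction j rule: dec_induct)
  case (step n)
  have "f (Suc n) \<le> f n" using assms(1,2) step by simp
  also have "f n \<le> f i" using step by simp
  finally show ?case .
qed simp

lemma unimodal_poly_iff:
  "unimodal_poly A \<longleftrightarrow> (\<forall>k. 0 \<le> coeff A k) \<and> unimodal_seq (coeff A)"
proof
  assume "unimodal_poly A"
  then show "(\<forall>k. 0 \<le> coeff A k) \<and> unimodal_seq (coeff A)"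
    unfolding unimodal_poly_def unimodal_seq_def by auto
next
  assume "(\<forall>k. 0 \<le> coeff A k) \<and> unimodal_seq (coeff A)"
  then obtain N where nonneg: "\<forall>k. 0 \<le> coeff A k"
    and up: "\<forall>k<N. coeff A k \<le> coeff A (Suc k)" and down: "\<forall>k\<ge>N. coeff A (Suc k) \<le> coeff A k"
    unfolding unimodal_seq_def by blast
  have "coeff A (Suc k) \<le> coeff A N" if "k < N" for k
    using lift_Suc_mono_le_upto[OF up, of "Suc k" N] that by simp
  moreover have "coeff A k \<le> coeff A N" if "N \<le> k" for k
    using lift_Suc_antimono_le_from[OF down, of N k] that by simp
  ultimately show "unimodal_poly A"
    unfolding unimodal_poly_def using nonneg up down by auto
qed

lemma unimodal_seqI_diff:
  fixes f :: "nat \<Rightarrow> real"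
  assumes up: "\<forall>k<M. f k \<le> f (Suc k)" and down: "\<forall>k\<ge>K. f (Suc k) \<le> f k"
    and antimono: "\<And>k k'. M \<le> k \<Longrightarrow> k \<le> k' \<Longrightarrow> k' \<le> K \<Longrightarrow> f (Suc k') - f k' \<le> f (Suc k) - f k"
  shows "unimodal_seq f"
proof -
  define N where "N = (LEAST k. M \<le> k \<and> f (Suc k) \<le> f k)"
  have "M \<le> max M K \<and> f (Suc (max M K)) \<le> f (max M K)"
    using down by simp
  then have N: "M \<le> N" "f (Suc N) \<le> f N"
    unfolding N_def by (metis (mono_tags, lifting) LeastI)+
  have "f k \<le> f (Suc k)" if "k < N" for k
    using not_less_Least[OF that[unfolded N_def]] up by (cases "k < M") auto
  moreover have "f (Suc k) \<le> f k" if "N \<le> k" for k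
    using down antimono[OF N(1) that] N(2) by (cases "K \<le> k") auto
  ultimately show ?thesis
    unfolding unimodal_seq_def by blast
qed

lemma unimodal_seq_stretch:
  assumes "unimodal_seq f" "0 < e"
  shows "unimodal_seq (\<lambda>m. f (m div e))"
proof -
  obtain N where up: "\<forall>k<N. f k \<le> f (Suc k)" and down: "\<forall>k\<ge>N. f (Suc k) \<le> f k"
    using assms(1) unfolding unimodal_seq_def by blast
  have step: "Suc m div e = m div e \<or> Suc m div e = Suc (m div e)" for m
    by (simp add: div_Suc)
  have "f (m div e) \<le> f (Suc m div e)" if "m < N * e" for m
  proof -
    have "m div e < N"
      using that assms(2) by (simp add: div_less_iff_less_mult)
    then show ?thesis
      using step[of m] up by auto
  qed
  moreover have "f (Suc m div e) \<le> f (m div e)" if "N * e \<le> m" for m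
  proof -
    have "N \<le> m div e"
      using div_le_mono[OF that, of e] assms(2) by simp
    then show ?thesis
      using step[of m] down by auto
  qed
  ultimately show ?thesis
    unfolding unimodal_seq_def by blast
qed

definition geom_poly :: "nat \<Rightarrow> real poly" where
  "geom_poly l = (\<Sum>i<l. monom 1 i)"

lemma one_minus_X_mult_geom_poly: "[:1, -1:] * geom_poly l = 1 - monom 1 l"
  unfolding geom_poly_def by (induction l) (simp_all add: algebra_simps monom_Suc)

lemma coeff_geom_poly: "coeff (geom_poly l) k = (if k < l then 1 else 0)"
  unfolding geom_poly_def coeff_sum by (simp add: coeff_monom)

lemma coeff_mult_nonneg:
  fixes A B :: "real poly"
  assumes "\<forall>k. 0 \<le> coeff A k" "\<forall>k. 0 \<le> coeff B k"
  shows "0 \<le> coeff (A * B) k"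
  unfolding coeff_mult using assms by (intro sum_nonneg mult_nonneg_nonneg) auto

lemma coeff_mult_geom_poly_diff:
  "coeff (A * geom_poly l) (Suc k) - coeff (A * geom_poly l) k =
     coeff A (Suc k) - (if l \<le> Suc k then coeff A (Suc k - l) else 0)"
proof -
  have "coeff (A * geom_poly l) (Suc k) - coeff (A * geom_poly l) k
      = coeff ([:1, -1:] * (A * geom_poly l)) (Suc k)"
    by simp
  also have "[:1, -1:] * (A * geom_poly l) = A * (1 - monom 1 l)"
    by (metis one_minus_X_mult_geom_poly mult.left_commute)
  also have "\<dots> = A - monom 1 l * A"
    by (simp add: algebra_simps)
  finally show ?thesis
    by (simp add: coeff_monom_mult)
qed

lemma unimodal_poly_mult_geom_poly:
  assumes "unimodal_poly A" "0 < l"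
  shows "unimodal_poly (A * geom_poly l)"
proof -
  obtain M where nonneg: "\<forall>k. 0 \<le> coeff A k"
    and up: "\<forall>k<M. coeff A k \<le> coeff A (Suc k)" and down: "\<forall>k\<ge>M. coeff A (Suc k) \<le> coeff A k"
    using assms(1) unfolding unimodal_poly_iff unimodal_seq_def by blast
  let ?a = "coeff A" and ?b = "coeff (A * geom_poly l)"
  have "unimodal_seq ?b"
  proof (rule unimodal_seqI_diff[where M = M and K = "M + l - 1"])
    show "\<forall>k<M. ?b k \<le> ?b (Suc k)"
    proof (intro allI impI)
      fix k assume "k < M"
      then have "l \<le> Suc k \<Longrightarrow> ?a (Suc k - l) \<le> ?a (Suc k)"
        using lift_Suc_mono_le_upto[OF up] by simp
      then show "?b k \<le> ?b (Suc k)"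
        using coeff_mult_geom_poly_diff[of A l k] nonneg[rule_format, of "Suc k"]
        by (cases "l \<le> Suc k") auto
    qed
    show "\<forall>k\<ge>M + l - 1. ?b (Suc k) \<le> ?b k"
    proof (intro allI impI)
      fix k assume "M + l - 1 \<le> k"
      then have "l \<le> Suc k" "?a (Suc k) \<le> ?a (Suc k - l)"
        using lift_Suc_antimono_le_from[OF down] assms(2) by simp_all
      then show "?b (Suc k) \<le> ?b k"
        using coeff_mult_geom_poly_diff[of A l k] by simp
    qed
    fix k k' assume k: "M \<le> k" "k \<le> k'" "k' \<le> M + l - 1"
    have "?a (Suc k') \<le> ?a (Suc k)"
      using lift_Suc_antimono_le_from[OF down] k by simp
    moreover have "(if l \<le> Suc k then ?a (Suc k - l) else 0) \<le> (if l \<le> Suc k' then ?a (Suc k' - l) else 0)"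
      using lift_Suc_mono_le_upto[OF up, of "Suc k - l" "Suc k' - l"] nonneg k assms(2) by auto
    ultimately show "?b (Suc k') - ?b k' \<le> ?b (Suc k) - ?b k"
      unfolding coeff_mult_geom_poly_diff by linarith
  qed
  then show ?thesis
    unfolding unimodal_poly_iff using nonneg coeff_mult_nonneg[of A "geom_poly l"] by (simp add: coeff_geom_poly)
qed

lemma unimodal_poly_mult_geom_poly_power:
  assumes "unimodal_poly A" "0 < l"
  shows "unimodal_poly (A * geom_poly l ^ j)"
proof (induction j)
  case (Suc j)
  show ?case
    using unimodal_poly_mult_geom_poly[OF Suc assms(2)] by (simp only: power_Suc2 mult.assoc)
qed (use assms(1) in simp)

lemma coeff_pcompose_monom_mult_geom_poly:
  assumes "0 < e"
  shows "coeff (A \<circ>\<^sub>p monom 1 e * geom_poly e) m = coeff A (m div e)"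
proof (induction A arbitrary: m rule: pCons_induct)
  case (pCons a A)
  have "pCons a A \<circ>\<^sub>p monom 1 e * geom_poly e
      = smult a (geom_poly e) + monom 1 e * (A \<circ>\<^sub>p monom 1 e * geom_poly e)"
    by (simp add: pcompose_pCons algebra_simps)
  then show ?case
    using pCons.IH[of "m - e"] assms
    by (cases "m < e") (auto simp: coeff_geom_poly coeff_monom_mult div_if coeff_pCons split: nat.split)
qed simp

lemma unimodal_poly_pcompose_monom_mult_geom_poly:
  assumes "unimodal_poly A" "0 < e"
  shows "unimodal_poly (A \<circ>\<^sub>p monom 1 e * geom_poly e)"
proof -
  have "coeff (A \<circ>\<^sub>p monom 1 e * geom_poly e) = (\<lambda>m. coeff A (m div e))"
    using coeff_pcompose_monom_mult_geom_poly[OF assms(2)] by auto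
  then show ?thesis
    using assms unimodal_seq_stretch[of "coeff A" e] by (simp add: unimodal_poly_iff)
qed

text \<open>The truncation to degree \<open>q\<close> of \<open>(1 - t) ^ -(s + 1)\<close>.\<close>
definition neg_binomial_poly :: "nat \<Rightarrow> nat \<Rightarrow> real poly" where
  "neg_binomial_poly s q = (\<Sum>k\<le>q. monom (real ((s + k) choose k)) k)"

lemma coeff_neg_binomial_poly:
  "coeff (neg_binomial_poly s q) k = (if k \<le> q then real ((s + k) choose k) else 0)"
  unfolding neg_binomial_poly_def coeff_sum by (simp add: coeff_monom)

lemma unimodal_neg_binomial_poly: "unimodal_poly (neg_binomial_poly s q)"
proof -
  have "(s + k) choose k \<le> (s + Suc k) choose Suc k" for k
    using binomial_Suc_Suc[of "s + k" k] by simp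
  then have "unimodal_seq (coeff (neg_binomial_poly s q))"
    unfolding unimodal_seq_def coeff_neg_binomial_poly by (intro exI[of _ q]) auto
  then show ?thesis
    unfolding unimodal_poly_iff coeff_neg_binomial_poly by simp
qed

section \<open>Factorisation of the matrix P\<close>

lemma index_mult_mat_sum:
  assumes "A \<in> carrier_mat n k" "B \<in> carrier_mat k m" "i < n" "j < m"
  shows "(A * B) $$ (i, j) = (\<Sum>l<k. A $$ (i, l) * B $$ (l, j))"
  using assms by (simp add: scalar_prod_def atLeast0LessThan)

lemma det_unit_upper_triangular:
  assumes "A \<in> carrier_mat n n" "upper_triangular A" "\<And>i. i < n \<Longrightarrow> A $$ (i, i) = 1"
  shows "det A = 1"
proof -
  have "diag_mat A = replicate n 1"
    using assms(1,3) by (auto simp: diag_mat_def map_replicate_const intro!: nth_equalityI)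
  then show ?thesis
    using det_upper_triangular[OF assms(2,1)] by simp
qed

lemma det_unit_lower_triangular:
  assumes "A \<in> carrier_mat n n" "\<And>i j. i < j \<Longrightarrow> j < n \<Longrightarrow> A $$ (i, j) = 0"
    and "\<And>i. i < n \<Longrightarrow> A $$ (i, i) = 1"
  shows "det A = 1"
proof -
  have "diag_mat A = replicate n 1"
    using assms(1,3) by (auto simp: diag_mat_def intro!: nth_equalityI)
  then show ?thesis
    using det_lower_triangular[OF assms(2,1)] by simp
qed

lemma det_eq_first_entry:
  assumes "A \<in> carrier_mat n n" "0 < n"
    and "\<And>i j. 0 < i \<Longrightarrow> i < n \<Longrightarrow> j < n \<Longrightarrow> A $$ (i, j) = (if i = j then 1 else 0)"
  shows "det A = A $$ (0, 0)"
proof -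
  have "upper_triangular A"
    using assms(1,3) by (auto simp: upper_triangular_def)
  moreover have "diag_mat A = A $$ (0, 0) # replicate (n - 1) 1"
    using assms by (auto simp: diag_mat_def nth_Cons' intro!: nth_equalityI)
  ultimately show ?thesis
    using det_upper_triangular[of A n] assms(1) by simp
qed

lemma sum_lessThan_window:
  fixes g :: "nat \<Rightarrow> 'a::comm_monoid_add"
  assumes "b < q"
  shows "(\<Sum>l<q. if a \<le> l \<and> l \<le> b then g l else 0) = (if a \<le> b then \<Sum>u\<le>b - a. g (a + u) else 0)"
proof -
  have "(\<Sum>l<q. if a \<le> l \<and> l \<le> b then g l else 0) = (\<Sum>l\<in>{l\<in>{..<q}. a \<le> l \<and> l \<le> b}. g l)"
    by (rule sum.inter_filter[symmetric]) simp
  also have "{l\<in>{..<q}. a \<le> l \<and> l \<le> b} = {a..b}"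
    using assms by auto
  also have "(\<Sum>l\<in>{a..b}. g l) = (if a \<le> b then \<Sum>u\<le>b - a. g (a + u) else 0)"
    by (cases "a \<le> b") (simp_all add: sum.atLeastAtMost_shift_0 atLeast0AtMost comp_def)
  finally show ?thesis .
qed

lemma vandermonde_band:
  assumes "m < q"
  shows "(\<Sum>l<q. if m \<le> l then (c choose (l - m)) * (b choose (q - 1 - l)) else 0) = (c + b) choose (q - 1 - m)"
proof -
  have "(\<Sum>l<q. if m \<le> l then (c choose (l - m)) * (b choose (q - 1 - l)) else 0)
      = (\<Sum>l<q. if m \<le> l \<and> l \<le> q - 1 then (c choose (l - m)) * (b choose (q - 1 - l)) else 0)"
    by (intro sum.cong) auto
  also have "\<dots> = (\<Sum>u\<le>q - 1 - m. (c choose u) * (b choose (q - 1 - m - u)))"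
    using assms by (subst sum_lessThan_window) auto
  also have "\<dots> = (c + b) choose (q - 1 - m)"
    by (rule vandermonde)
  finally show ?thesis .
qed

lemma vandermonde_band_shifted:
  assumes "m < q" "b < q"
  shows "(\<Sum>l<q. if m \<le> l + 1 then (c choose (l + 1 - m)) * (b choose (q - 1 - l)) else 0) = (c + b) choose (q - m)"
proof (cases m)
  case (Suc m')
  have "(\<Sum>l<q. if m \<le> l + 1 then (c choose (l + 1 - m)) * (b choose (q - 1 - l)) else 0)
      = (\<Sum>l<q. if m' \<le> l \<and> l \<le> q - 1 then (c choose (l + 1 - m)) * (b choose (q - 1 - l)) else 0)"
    using Suc by (intro sum.cong) auto
  also have "\<dots> = (\<Sum>u\<le>q - m. (c choose u) * (b choose (q - m - u)))"
    using assms Suc by (subst sum_lessThan_window) auto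
  also have "\<dots> = (c + b) choose (q - m)"
    by (rule vandermonde)
  finally show ?thesis .
next
  case 0
  have "(c + b) choose q = (\<Sum>k\<le>q. (c choose k) * (b choose (q - k)))"
    by (rule vandermonde[symmetric])
  also have "\<dots> = (b choose q) + (\<Sum>k<q. (c choose Suc k) * (b choose (q - Suc k)))"
    by (subst sum.atMost_shift) simp
  also have "b choose q = 0"
    using assms by simp
  finally show ?thesis
    using 0 by simp
qed

lemma sum_monom_pascal_rule:
  assumes "a < q"
  shows "(\<Sum>k\<le>q + 1. monom (real (Suc a choose k) * real (b choose k)) k :: real poly)
    = (\<Sum>u<q. monom (real (a choose u) * real (b choose u)) u
         + monom (real (a choose u) * real (b choose Suc u)) (Suc u))"
proof -
  define F where "F k = (monom (real (a choose k) * real (b choose k)) k :: real poly)" for k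
  define G where "G u = (monom (real (a choose u) * real (b choose Suc u)) (Suc u) :: real poly)" for u
  have "(\<Sum>k\<le>q + 1. monom (real (Suc a choose k) * real (b choose k)) k :: real poly)
      = monom (real (Suc a choose 0) * real (b choose 0)) 0
        + (\<Sum>u\<le>q. monom (real (Suc a choose Suc u) * real (b choose Suc u)) (Suc u))"
    unfolding Suc_eq_plus1[symmetric] by (rule sum.atMost_Suc_shift)
  also have "\<dots> = F 0 + (\<Sum>u\<le>q. G u + F (Suc u))"
    unfolding F_def G_def by (simp add: distrib_right add_monom)
  also have "\<dots> = (\<Sum>u\<le>q. G u) + (F 0 + (\<Sum>u\<le>q. F (Suc u)))"
    by (simp add: sum.distrib)
  also have "F 0 + (\<Sum>u\<le>q. F (Suc u)) = (\<Sum>k\<le>Suc q. F k)"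
    by (rule sum.atMost_Suc_shift[symmetric])
  also have "(\<Sum>u\<le>q. G u) = (\<Sum>u<q. G u)"
    using assms by (intro sum.mono_neutral_right) (auto simp: G_def)
  also have "(\<Sum>k\<le>Suc q. F k) = (\<Sum>u<q. F u)"
    using assms by (intro sum.mono_neutral_right) (auto simp: F_def)
  finally show ?thesis
    by (simp add: F_def G_def sum.distrib)
qed

definition pascal_mat :: "nat \<Rightarrow> real poly mat" where
  "pascal_mat q = mat q q (\<lambda>(i, m). monom (real ((q - 1 - i) choose (q - 1 - m))) 0)"

definition monom_diag_mat :: "nat \<Rightarrow> real poly mat" where
  "monom_diag_mat q = mat q q (\<lambda>(i, m). if i = m then monom 1 (q - 1 - i) else 0)"

definition binom_band_mat :: "nat \<Rightarrow> nat \<Rightarrow> real poly mat" where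
  "binom_band_mat q c = mat q q (\<lambda>(m, l).
     monom (if m \<le> l then real (c choose (l - m)) else 0) 0
     + monom (if m \<le> l + 1 then real (c choose (l + 1 - m)) else 0) 1)"

lemma pascal_mat_carrier [simp]: "pascal_mat q \<in> carrier_mat q q"
  and monom_diag_mat_carrier [simp]: "monom_diag_mat q \<in> carrier_mat q q"
  and binom_band_mat_carrier [simp]: "binom_band_mat q c \<in> carrier_mat q q"
  by (simp_all add: pascal_mat_def monom_diag_mat_def binom_band_mat_def)

lemma binom_band_mult_pascal_transpose_carrier [simp]:
  "binom_band_mat q c * transpose_mat (pascal_mat q) \<in> carrier_mat q q"
  by (simp add: mult_carrier_mat[of _ q q _ q])

lemma binom_band_mult_pascal_transpose:
  assumes "m < q" "j < q"
  shows "(binom_band_mat q c * transpose_mat (pascal_mat q)) $$ (m, j)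
    = monom (real ((c + (q - 1 - j)) choose (q - 1 - m))) 0 + monom (real ((c + (q - 1 - j)) choose (q - m))) 1"
proof -
  define b where "b = q - 1 - j"
  have "b < q"
    using assms by (simp add: b_def)
  have "(binom_band_mat q c * transpose_mat (pascal_mat q)) $$ (m, j)
      = (\<Sum>l<q. binom_band_mat q c $$ (m, l) * transpose_mat (pascal_mat q) $$ (l, j))"
    using assms by (intro index_mult_mat_sum) auto
  also have "\<dots> = (\<Sum>l<q. monom (if m \<le> l then real ((c choose (l - m)) * (b choose (q - 1 - l))) else 0) 0
           + monom (if m \<le> l + 1 then real ((c choose (l + 1 - m)) * (b choose (q - 1 - l))) else 0) 1)"
    using assms unfolding b_def
    by (auto simp: binom_band_mat_def pascal_mat_def distrib_right mult_monom intro!: sum.cong)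
  also have "\<dots> = monom (real (\<Sum>l<q. if m \<le> l then (c choose (l - m)) * (b choose (q - 1 - l)) else 0)) 0
      + monom (real (\<Sum>l<q. if m \<le> l + 1 then (c choose (l + 1 - m)) * (b choose (q - 1 - l)) else 0)) 1"
    by (simp add: sum.distrib monom_sum of_nat_sum if_distrib cong: if_cong)
  also have "\<dots> = monom (real ((c + b) choose (q - 1 - m))) 0 + monom (real ((c + b) choose (q - m))) 1"
    by (simp only: vandermonde_band[OF assms(1)] vandermonde_band_shifted[OF assms(1) \<open>b < q\<close>])
  finally show ?thesis
    unfolding b_def .
qed

lemma monom_diag_mat_mult:
  assumes "X \<in> carrier_mat q n" "m < q" "j < n"
  shows "(monom_diag_mat q * X) $$ (m, j) = monom 1 (q - 1 - m) * X $$ (m, j)"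
proof -
  have "(monom_diag_mat q * X) $$ (m, j) = (\<Sum>l<q. monom_diag_mat q $$ (m, l) * X $$ (l, j))"
    using assms by (intro index_mult_mat_sum) auto
  also have "\<dots> = (\<Sum>l<q. if l = m then monom 1 (q - 1 - m) * X $$ (l, j) else 0)"
    by (intro sum.cong) (use assms(2) in \<open>auto simp: monom_diag_mat_def\<close>)
  finally show ?thesis
    using assms(2) by simp
qed

lemma monom_diag_mult_binom_band_mult_pascal_transpose:
  assumes "m < q" "j < q"
  shows "(monom_diag_mat q * (binom_band_mat q c * transpose_mat (pascal_mat q))) $$ (m, j)
    = monom (real ((c + (q - 1 - j)) choose (q - 1 - m))) (q - 1 - m)
      + monom (real ((c + (q - 1 - j)) choose (q - m))) (q - m)"
  using assms
  by (simp add: monom_diag_mat_mult[of _ q q] binom_band_mult_pascal_transpose distrib_left mult_monom Suc_diff_Suc)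

lemma Pmat_factorization:
  "pascal_mat q * (monom_diag_mat q * (binom_band_mat q c * transpose_mat (pascal_mat q)))
     = Pmat (Suc q + c) (Suc q)"
  (is "pascal_mat q * ?Y = _")
proof (rule eq_matI)
  fix i j assume "i < dim_row (Pmat (Suc q + c) (Suc q))" "j < dim_col (Pmat (Suc q + c) (Suc q))"
  then have i: "i < q" and j: "j < q"
    by (simp_all add: Pmat_def)
  define a where "a = q - 1 - i"
  define b where "b = c + (q - 1 - j)"
  define g where "g m = (monom (real (a choose (q - 1 - m)) * real (b choose (q - 1 - m))) (q - 1 - m)
      + monom (real (a choose (q - 1 - m)) * real (b choose (q - m))) (q - m) :: real poly)" for m
  have "(pascal_mat q * ?Y) $$ (i, j) = (\<Sum>m<q. pascal_mat q $$ (i, m) * ?Y $$ (m, j))"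
    using i j mult_carrier_mat[OF monom_diag_mat_carrier binom_band_mult_pascal_transpose_carrier]
    by (intro index_mult_mat_sum) auto
  also have "\<dots> = (\<Sum>m<q. pascal_mat q $$ (i, m)
      * (monom (real (b choose (q - 1 - m))) (q - 1 - m) + monom (real (b choose (q - m))) (q - m)))"
    using j by (intro sum.cong refl) (simp add: monom_diag_mult_binom_band_mult_pascal_transpose b_def)
  also have "\<dots> = (\<Sum>m<q. g m)"
    using i by (intro sum.cong refl) (simp add: pascal_mat_def a_def g_def distrib_left mult_monom)
  also have "\<dots> = (\<Sum>u<q. g (q - Suc u))"
    by (rule sum.nat_diff_reindex[symmetric])
  also have "\<dots> = (\<Sum>u<q. monom (real (a choose u) * real (b choose u)) u
         + monom (real (a choose u) * real (b choose Suc u)) (Suc u))"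
    by (intro sum.cong refl) (simp add: g_def Suc_diff_Suc)
  also have "\<dots> = (\<Sum>k\<le>q + 1. monom (real (Suc a choose k) * real (b choose k)) k)"
    using i by (intro sum_monom_pascal_rule[symmetric]) (simp add: a_def)
  also have "\<dots> = Pmat (Suc q + c) (Suc q) $$ (i, j)"
  proof -
    have "Suc q - (i + 1) = Suc a" "Suc q + c - 1 - (j + 1) = b"
      using i j by (simp_all add: a_def b_def)
    then show ?thesis
      using i j by (simp add: Pmat_def)
  qed
  finally show "(pascal_mat q * ?Y) $$ (i, j) = Pmat (Suc q + c) (Suc q) $$ (i, j)" .
qed (simp_all add: Pmat_def pascal_mat_def)

lemma det_pascal_mat: "det (pascal_mat q) = 1"
  by (rule det_unit_upper_triangular[of _ q]) (auto simp: upper_triangular_def pascal_mat_def)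

lemma prod_monom_lessThan: "(\<Prod>i<q. monom (1::real) i) = monom 1 (q choose 2)"
proof (induction q)
  case (Suc q)
  have "Suc q choose 2 = (q choose 2) + q"
    by (simp add: numeral_2_eq_2)
  then show ?case
    using Suc by (simp add: mult_monom)
qed (simp add: numeral_2_eq_2 monom_0 one_pCons)

lemma det_monom_diag_mat: "det (monom_diag_mat q) = monom 1 (q choose 2)"
proof -
  have "det (monom_diag_mat q) = prod_list (diag_mat (monom_diag_mat q))"
    by (rule det_upper_triangular[of _ q]) (auto simp: upper_triangular_def monom_diag_mat_def)
  also have "diag_mat (monom_diag_mat q) = map (\<lambda>i. monom 1 (q - Suc i)) [0..<q]"
    by (auto simp: diag_mat_def monom_diag_mat_def)
  also have "prod_list (map (\<lambda>i. monom 1 (q - Suc i)) [0..<q]) = (\<Prod>i<q. monom (1::real) (q - Suc i))"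
    by (simp add: prod.distinct_set_conv_list[symmetric] atLeast0LessThan)
  also have "\<dots> = (\<Prod>i<q. monom 1 i)"
    by (rule prod.nat_diff_reindex)
  finally show ?thesis
    by (simp add: prod_monom_lessThan)
qed

lemma det_Pmat: "det (Pmat (Suc q + c) (Suc q)) = monom 1 (q choose 2) * det (binom_band_mat q c)"
proof -
  let ?Y = "binom_band_mat q c * transpose_mat (pascal_mat q)"
  have Y: "?Y \<in> carrier_mat q q" and DY: "monom_diag_mat q * ?Y \<in> carrier_mat q q"
    using mult_carrier_mat[OF monom_diag_mat_carrier binom_band_mult_pascal_transpose_carrier] by simp_all
  have "det (Pmat (Suc q + c) (Suc q)) = det (pascal_mat q) * det (monom_diag_mat q * ?Y)"
    unfolding Pmat_factorization[symmetric] using DY by (intro det_mult[of _ q]) auto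
  also have "det (monom_diag_mat q * ?Y) = det (monom_diag_mat q) * det ?Y"
    using Y by (intro det_mult[of _ q]) auto
  also have "det ?Y = det (binom_band_mat q c) * det (transpose_mat (pascal_mat q))"
    by (intro det_mult[of _ q]) auto
  finally show ?thesis
    by (simp add: det_transpose[of _ q] det_pascal_mat det_monom_diag_mat)
qed

section \<open>Determinant of the band matrix\<close>

text \<open>The inverse of the upper triangular Toeplitz matrix of \<open>(1 + x) ^ c\<close>.\<close>
definition binom_inv_toeplitz_mat :: "nat \<Rightarrow> nat \<Rightarrow> real poly mat" where
  "binom_inv_toeplitz_mat q c = mat q q (\<lambda>(l, l'). if l \<le> l' then monom ((- real c) gchoose (l' - l)) 0 else 0)"

text \<open>The inverse of \<open>I + t L\<close>, where \<open>L\<close> is the lower shift matrix.\<close>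
definition shift_inv_mat :: "nat \<Rightarrow> real poly mat" where
  "shift_inv_mat q = mat q q (\<lambda>(l, l'). if l' \<le> l then monom ((-1) ^ (l - l')) (l - l') else 0)"

lemma binom_inv_toeplitz_mat_carrier [simp]: "binom_inv_toeplitz_mat q c \<in> carrier_mat q q"
  and shift_inv_mat_carrier [simp]: "shift_inv_mat q \<in> carrier_mat q q"
  by (simp_all add: binom_inv_toeplitz_mat_def shift_inv_mat_def)

lemma binom_band_mult_binom_inv_toeplitz_carrier [simp]:
  "binom_band_mat q c * binom_inv_toeplitz_mat q c \<in> carrier_mat q q"
  by (simp add: mult_carrier_mat[of _ q q _ q])

lemma det_binom_inv_toeplitz_mat: "det (binom_inv_toeplitz_mat q c) = 1"
  by (rule det_unit_upper_triangular[of _ q]) (auto simp: upper_triangular_def binom_inv_toeplitz_mat_def)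

lemma det_shift_inv_mat: "det (shift_inv_mat q) = 1"
  by (rule det_unit_lower_triangular[of _ q]) (auto simp: shift_inv_mat_def)

lemma binomial_conv_neg_binomial:
  "(\<Sum>r\<le>N. real (c choose r) * ((- real c) gchoose (N - r))) = (if N = 0 then 1 else 0)"
proof -
  have "(\<Sum>r\<le>N. real (c choose r) * ((- real c) gchoose (N - r)))
      = (\<Sum>r\<in>{0..N}. (real c gchoose r) * ((- real c) gchoose (N - r)))"
    by (simp add: binomial_gbinomial atLeast0AtMost)
  also have "\<dots> = (real c + - real c) gchoose N"
    by (rule gbinomial_Vandermonde)
  finally show ?thesis
    by (simp add: gbinomial_0_left)
qed

lemma binomial_conv_neg_binomial_band:
  assumes "l' < q"
  shows "(\<Sum>l<q. if m \<le> l \<and> l \<le> l' then real (c choose (l - m)) * ((- real c) gchoose (l' - l)) else 0)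
    = (if m = l' then 1 else 0)"
proof -
  have "(\<Sum>l<q. if m \<le> l \<and> l \<le> l' then real (c choose (l - m)) * ((- real c) gchoose (l' - l)) else 0)
      = (if m \<le> l' then \<Sum>u\<le>l' - m. real (c choose u) * ((- real c) gchoose (l' - m - u)) else 0)"
    using assms by (subst sum_lessThan_window) auto
  then show ?thesis
    using binomial_conv_neg_binomial[where N = "l' - m" and c = c] by auto
qed

lemma binomial_conv_neg_binomial_band_shifted:
  assumes "l' < q"
  shows "(\<Sum>l<q. if m \<le> l + 1 \<and> l \<le> l' then real (c choose (l + 1 - m)) * ((- real c) gchoose (l' - l)) else 0)
     = (if m = l' + 1 then 1 else 0) - (if m = 0 then (- real c) gchoose (l' + 1) else 0)"
proof (cases m)
  case (Suc m')
  have "(\<Sum>l<q. if m \<le> l + 1 \<and> l \<le> l' then real (c choose (l + 1 - m)) * ((- real c) gchoose (l' - l)) else 0)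
      = (\<Sum>l<q. if m' \<le> l \<and> l \<le> l' then real (c choose (l - m')) * ((- real c) gchoose (l' - l)) else 0)"
    using Suc by (intro sum.cong) auto
  then show ?thesis
    using binomial_conv_neg_binomial_band[OF assms, of m' c] Suc by simp
next
  case 0
  have "(\<Sum>l<q. if m \<le> l + 1 \<and> l \<le> l' then real (c choose (l + 1 - m)) * ((- real c) gchoose (l' - l)) else 0)
      = (\<Sum>l<q. if 0 \<le> l \<and> l \<le> l' then real (c choose Suc l) * ((- real c) gchoose (l' - l)) else 0)"
    using 0 by (intro sum.cong) auto
  also have "\<dots> = (\<Sum>u\<le>l'. real (c choose Suc u) * ((- real c) gchoose (l' - u)))"
    using assms by (subst sum_lessThan_window) auto
  also have "\<dots> = (\<Sum>r\<le>Suc l'. real (c choose r) * ((- real c) gchoose (Suc l' - r))) - ((- real c) gchoose Suc l')"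
    by (subst sum.atMost_Suc_shift) simp
  also have "\<dots> = - ((- real c) gchoose Suc l')"
    using binomial_conv_neg_binomial[where N = "Suc l'" and c = c] by simp
  finally show ?thesis
    using 0 by simp
qed

lemma binom_band_mult_binom_inv_toeplitz:
  "binom_band_mat q c * binom_inv_toeplitz_mat q c = mat q q (\<lambda>(m, l').
     monom (if m = l' then 1 else 0) 0
     + monom ((if m = l' + 1 then 1 else 0) - (if m = 0 then (- real c) gchoose (l' + 1) else 0)) 1)"
  (is "_ = ?Z")
proof (rule eq_matI)
  fix m l' assume "m < dim_row ?Z" "l' < dim_col ?Z"
  then have m: "m < q" and l': "l' < q"
    by simp_all
  have "(binom_band_mat q c * binom_inv_toeplitz_mat q c) $$ (m, l')
      = (\<Sum>l<q. binom_band_mat q c $$ (m, l) * binom_inv_toeplitz_mat q c $$ (l, l'))"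
    using m l' by (intro index_mult_mat_sum) auto
  also have "\<dots> = (\<Sum>l<q.
        monom (if m \<le> l \<and> l \<le> l' then real (c choose (l - m)) * ((- real c) gchoose (l' - l)) else 0) 0
      + monom (if m \<le> l + 1 \<and> l \<le> l' then real (c choose (l + 1 - m)) * ((- real c) gchoose (l' - l)) else 0) 1)"
    using m l'
    by (intro sum.cong) (auto simp: binom_band_mat_def binom_inv_toeplitz_mat_def distrib_right mult_monom)
  also have "\<dots> = monom (\<Sum>l<q. if m \<le> l \<and> l \<le> l' then real (c choose (l - m)) * ((- real c) gchoose (l' - l)) else 0) 0
      + monom (\<Sum>l<q. if m \<le> l + 1 \<and> l \<le> l' then real (c choose (l + 1 - m)) * ((- real c) gchoose (l' - l)) else 0) 1"
    by (simp add: sum.distrib monom_sum)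
  also have "\<dots> = monom (if m = l' then 1 else 0) 0
     + monom ((if m = l' + 1 then 1 else 0) - (if m = 0 then (- real c) gchoose (l' + 1) else 0)) 1"
    by (simp only: binomial_conv_neg_binomial_band[OF l'] binomial_conv_neg_binomial_band_shifted[OF l'])
  finally show "(binom_band_mat q c * binom_inv_toeplitz_mat q c) $$ (m, l') = ?Z $$ (m, l')"
    using m l' by simp
qed (simp_all add: binom_band_mat_def binom_inv_toeplitz_mat_def)

lemma binom_band_mult_binom_inv_toeplitz_first_row:
  assumes "l < q"
  shows "(binom_band_mat q c * binom_inv_toeplitz_mat q c) $$ (0, l)
    = monom (if l = 0 then 1 else 0) 0 - monom ((- real c) gchoose Suc l) 1"
  using assms by (simp add: binom_band_mult_binom_inv_toeplitz minus_monom)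

lemma binom_band_mult_inverses_row:
  assumes "0 < m" "m < q" "l' < q"
  shows "(binom_band_mat q c * binom_inv_toeplitz_mat q c * shift_inv_mat q) $$ (m, l') = (if m = l' then 1 else 0)"
proof -
  let ?W = "shift_inv_mat q"
  have "(binom_band_mat q c * binom_inv_toeplitz_mat q c * ?W) $$ (m, l')
      = (\<Sum>l<q. (binom_band_mat q c * binom_inv_toeplitz_mat q c) $$ (m, l) * ?W $$ (l, l'))"
    using assms by (intro index_mult_mat_sum) auto
  also have "\<dots> = (\<Sum>l<q. (if l = m then ?W $$ (l, l') else 0) + (if l = m - 1 then monom 1 1 * ?W $$ (l, l') else 0))"
    using assms by (intro sum.cong) (auto simp: binom_band_mult_binom_inv_toeplitz distrib_right)
  also have "\<dots> = ?W $$ (m, l') + monom 1 1 * ?W $$ (m - 1, l')"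
    using assms by (simp add: sum.distrib)
  also have "\<dots> = (if m = l' then 1 else 0)"
  proof (cases "l' < m")
    case True
    then obtain x where x: "m - l' = Suc x" "m - 1 - l' = x"
      by (metis Suc_diff_Suc diff_Suc_1 diff_commute)
    have "?W $$ (m, l') + monom 1 1 * ?W $$ (m - 1, l') = monom ((-1) ^ Suc x) (Suc x) + monom ((-1) ^ x) (Suc x)"
      using True assms x by (simp add: shift_inv_mat_def mult_monom)
    also have "\<dots> = 0"
      by (simp add: add_monom)
    finally show ?thesis
      using True by simp
  next
    case False
    then show ?thesis
      using assms by (auto simp: shift_inv_mat_def monom_0 one_pCons)
  qed
  finally show ?thesis .
qed

lemma binom_band_mult_inverses_first_entry:
  assumes "0 < q"
  shows "(binom_band_mat q (Suc s) * binom_inv_toeplitz_mat q (Suc s) * shift_inv_mat q) $$ (0, 0)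
    = neg_binomial_poly s q"
proof -
  let ?Z = "binom_band_mat q (Suc s) * binom_inv_toeplitz_mat q (Suc s)" and ?W = "shift_inv_mat q"
  define g where "g k = (- real (Suc s)) gchoose k" for k
  have g: "g (Suc l) * (-1) ^ l = - real ((s + Suc l) choose Suc l)" for l
  proof -
    have "real (Suc s) + of_nat (Suc l) - 1 = real (s + Suc l)"
      by simp
    then have "g (Suc l) = (-1) ^ Suc l * real ((s + Suc l) choose Suc l)"
      unfolding g_def by (simp only: gbinomial_minus binomial_gbinomial)
    then show ?thesis
      by (cases "even l") simp_all
  qed
  have "?Z $$ (0, l) * ?W $$ (l, 0) = (if l = 0 then 1 else 0) + monom (real ((s + Suc l) choose Suc l)) (Suc l)"
    if "l < q" for l
  proof -
    have "?Z $$ (0, l) * ?W $$ (l, 0) = (monom (if l = 0 then 1 else 0) 0 - monom (g (Suc l)) 1) * monom ((-1) ^ l) l"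
      using that binom_band_mult_binom_inv_toeplitz_first_row[OF that, of "Suc s"]
      by (simp add: shift_inv_mat_def g_def)
    also have "\<dots> = monom ((if l = 0 then 1 else 0) * (-1) ^ l) l - monom (g (Suc l) * (-1) ^ l) (Suc l)"
      by (simp add: left_diff_distrib mult_monom)
    also have "\<dots> = (if l = 0 then 1 else 0) + monom (real ((s + Suc l) choose Suc l)) (Suc l)"
      by (cases "l = 0") (simp_all only: g minus_monom[symmetric] diff_minus_eq_add, simp_all add: monom_0 one_pCons)
    finally show ?thesis .
  qed
  then have "(?Z * ?W) $$ (0, 0) = (\<Sum>l<q. (if l = 0 then 1 else 0) + monom (real ((s + Suc l) choose Suc l)) (Suc l))"
    using assms by (subst index_mult_mat_sum[of _ q q]) (auto intro: mult_carrier_mat)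
  also have "\<dots> = 1 + (\<Sum>l<q. monom (real ((s + Suc l) choose Suc l)) (Suc l))"
    using assms by (simp add: sum.distrib)
  also have "\<dots> = neg_binomial_poly s q"
    unfolding neg_binomial_poly_def by (subst sum.atMost_shift) (simp add: monom_0 one_pCons)
  finally show ?thesis .
qed

lemma det_binom_band_mat: "det (binom_band_mat q (Suc s)) = neg_binomial_poly s q"
proof (cases "q = 0")
  case True
  then show ?thesis
    by (simp add: det_def binom_band_mat_def neg_binomial_poly_def monom_0 one_pCons)
next
  case False
  let ?E = "binom_band_mat q (Suc s)" and ?K = "binom_inv_toeplitz_mat q (Suc s)" and ?W = "shift_inv_mat q"
  have "det (?E * ?K * ?W) = det (?E * ?K) * det ?W"
    by (intro det_mult[of _ q]) (auto intro: mult_carrier_mat)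
  also have "det (?E * ?K) = det ?E * det ?K"
    by (intro det_mult[of _ q]) auto
  finally have "det (?E * ?K * ?W) = det ?E"
    by (simp add: det_binom_inv_toeplitz_mat det_shift_inv_mat)
  moreover have "det (?E * ?K * ?W) = (?E * ?K * ?W) $$ (0, 0)"
    using False binom_band_mult_inverses_row mult_carrier_mat[OF binom_band_mult_binom_inv_toeplitz_carrier shift_inv_mat_carrier]
    by (intro det_eq_first_entry[of _ q]) auto
  ultimately show ?thesis
    using False binom_band_mult_inverses_first_entry by simp
qed

section \<open>The Hilbert series\<close>

lemma pcompose_monom_monom: "monom a k \<circ>\<^sub>p monom (1 :: 'a :: comm_semiring_1) e = monom a (k * e)"
proof (induction k)
  case (Suc k)
  have "monom a (Suc k) \<circ>\<^sub>p monom 1 e = monom 1 e * (monom a k \<circ>\<^sub>p monom 1 e)"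
    by (simp add: monom_Suc pcompose_pCons)
  then show ?case
    using Suc by (simp add: mult_monom)
qed (simp add: monom_0)

lemma comm_ring_hom_pcompose: "comm_ring_hom (\<lambda>x :: 'a :: comm_ring_1 poly. x \<circ>\<^sub>p r)"
  by unfold_locales (simp_all add: pcompose_add pcompose_mult pcompose_1)

lemma det_pcompose_Pmat:
  "det (map_mat (\<lambda>x. x \<circ>\<^sub>p monom 1 e) (Pmat (Suc q + Suc s) (Suc q)))
     = monom 1 (e * (q choose 2)) * (neg_binomial_poly s q \<circ>\<^sub>p monom 1 e)"
  unfolding comm_ring_hom.hom_det[OF comm_ring_hom_pcompose] det_Pmat det_binom_band_mat
  by (simp add: pcompose_mult pcompose_monom_monom mult.commute)

lemma unimodal_poly_hilbert_numerator:
  assumes "0 < d"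
  shows "unimodal_poly (neg_binomial_poly s q \<circ>\<^sub>p monom 1 e * geom_poly e ^ Suc c * geom_poly d ^ p)"
proof (cases "e = 0")
  case True
  then show ?thesis
    by (simp add: geom_poly_def unimodal_poly_def)
next
  case False
  then have "unimodal_poly (neg_binomial_poly s q \<circ>\<^sub>p monom 1 e * geom_poly e * geom_poly e ^ c * geom_poly d ^ p)"
    using assms
    by (intro unimodal_poly_mult_geom_poly_power unimodal_poly_pcompose_monom_mult_geom_poly
        unimodal_neg_binomial_poly) simp_all
  then show ?thesis
    by (simp add: ac_simps)
qed

theorem lemma9:
  fixes n p d :: nat
  assumes "0 < n" "0 < p" "0 < d" "p < n"
  shows "\<exists>H :: real poly.
    H * monom 1 ((d - 1) * ((p - 1) choose 2)) * [:1, -1:] ^ n =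
      det (map_mat (\<lambda>e. e \<circ>\<^sub>p monom 1 (d - 1)) (Pmat n p))
      * (1 - monom 1 d) ^ p * (1 - monom 1 (d - 1)) ^ (n - p)
    \<and> unimodal_poly H"
proof -
  obtain q s where p: "p = Suc q" and n: "n = Suc q + Suc s"
    using assms by (metis add_Suc_right less_imp_Suc_add not0_implies_Suc)
  define e where "e = d - 1"
  define H where "H = neg_binomial_poly s q \<circ>\<^sub>p monom 1 e * geom_poly e ^ Suc s * geom_poly d ^ p"
  have "det (map_mat (\<lambda>x. x \<circ>\<^sub>p monom 1 e) (Pmat n p)) * (1 - monom 1 d) ^ p * (1 - monom 1 e) ^ (n - p)
      = monom 1 (e * (q choose 2)) * (neg_binomial_poly s q \<circ>\<^sub>p monom 1 e)
        * ([:1, -1:] * geom_poly d) ^ p * ([:1, -1:] * geom_poly e) ^ Suc s"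
    unfolding one_minus_X_mult_geom_poly n p det_pcompose_Pmat by simp
  also have "\<dots> = H * monom 1 (e * ((p - 1) choose 2)) * [:1, -1:] ^ n"
    unfolding H_def n p power_mult_distrib power_add by (simp only: ac_simps diff_Suc_1)
  finally show ?thesis
    using unimodal_poly_hilbert_numerator[OF assms(3)] unfolding H_def e_def by metis
qed

end
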